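(* If $u\in\operatorname{Lip}([0,1])$, then for all $n\in\mathbb{N}$ the function $\operatorname{Avg}_1^{(n)}u$ is Lipschitz on $V_1^{(n)}$ with $[\operatorname{Avg}_1^{(n)}u]_{\operatorname{Lip}(V_1^{(n)})}\le[u]_{\operatorname{Lip}([0,1])}$.
   Context: $V_1^{(n)}=\{k/2^n:0\le k\le2^n\}$. For $\bar x\in V_1^{(n)}$, $U_1^{(n)}(\bar x)=[\bar x-2^{-n-1},\bar x+2^{-n-1})\cap[0,1]$ and $\operatorname{Avg}_1^{(n)}u(\bar x)=\frac1{|U_1^{(n)}(\bar x)|}\int_{U_1^{(n)}(\bar x)}u(z)\,dz$. $[f]_{\operatorname{Lip}(A)}=\sup_{x\ne y\in A}|f(x)-f(y)|/|x-y|$. *)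

theory Defs
  imports "HOL-Analysis.Analysis"
begin

definition V1 :: "nat \<Rightarrow> real set" where
  "V1 n = {real k / 2 ^ n | k::nat. k \<le> 2 ^ n}"

definition U1 :: "nat \<Rightarrow> real \<Rightarrow> real set" where
  "U1 n xb = {xb - 1 / 2 ^ (n + 1) ..< xb + 1 / 2 ^ (n + 1)} \<inter> {0..1}"

definition Avg1 :: "nat \<Rightarrow> (real \<Rightarrow> real) \<Rightarrow> real \<Rightarrow> real" where
  "Avg1 n u xb = integral (U1 n xb) u / measure lebesgue (U1 n xb)"

definition lip_semi :: "real set \<Rightarrow> (real \<Rightarrow> real) \<Rightarrow> real" where
  "lip_semi A f = Sup {\<bar>f x - f y\<bar> / \<bar>x - y\<bar> | x y. x \<in> A \<and> y \<in> A \<and> x \<noteq> y}"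

end

theory Submission
  imports Defs
begin

text \<open>With \<open>h = 2^-(n+1)\<close>, the cell average \<open>Avg1 n u x\<close> is the mean of \<open>u\<close> over
  \<open>[max 0 (x - h), min 1 (x + h)]\<close>, since the cell differs from this interval by a null set.
  Parametrising the interval linearly by \<open>s \<in> [0,1]\<close>, the mean becomes
  \<open>\<integral>\<^sub>0\<^sup>1 u((1 - s) a + s b) ds\<close>. Moving \<open>x\<close> to \<open>y\<close> moves both endpoints, hence every
  point \<open>(1 - s) a + s b\<close>, by at most \<open>|x - y|\<close>; so the integrands differ by at most
  \<open>[u]\<^sub>L\<^sub>i\<^sub>p |x - y|\<close> and \<open>Avg1 n u\<close> is \<open>[u]\<^sub>L\<^sub>i\<^sub>p\<close>-Lipschitz on all of \<open>[0,1]\<close>,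
  in particular on the grid \<open>V1 n\<close>.\<close>

definition segment_mean :: "(real \<Rightarrow> real) \<Rightarrow> real \<Rightarrow> real \<Rightarrow> real" where
  "segment_mean u a b = integral {0..1} (\<lambda>s. u ((1 - s) * a + s * b))"

lemma segment_mean_eq_interval_average:
  fixes u :: "real \<Rightarrow> real"
  assumes "a < b" and "continuous_on {a..b} u"
  shows "segment_mean u a b = integral {a..b} u / (b - a)"
proof -
  have "(u has_integral integral {a..b} u) (cbox a b)"
    using integrable_continuous_interval[OF assms(2)] by (simp add: integrable_integral)
  from has_integral_affinity'[OF this, of "b - a" a]
  have "((\<lambda>s. u ((b - a) * s + a)) has_integral integral {a..b} u / (b - a)) {0..1}"
    using assms(1) by (simp add: divide_simps)
  moreover have "(b - a) * s + a = (1 - s) * a + s * b" for s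
    by (simp add: algebra_simps)
  ultimately show ?thesis
    unfolding segment_mean_def by (simp add: integral_unique)
qed

lemma segment_mean_lipschitz:
  fixes u :: "real \<Rightarrow> real"
  assumes u: "M-lipschitz_on S u" and "convex S"
    and S: "a \<in> S" "b \<in> S" "a' \<in> S" "b' \<in> S"
    and d: "\<bar>a - a'\<bar> \<le> d" "\<bar>b - b'\<bar> \<le> d"
  shows "\<bar>segment_mean u a b - segment_mean u a' b'\<bar> \<le> M * d"
proof -
  have in_S: "(1 - s) * p + s * q \<in> S" if "p \<in> S" "q \<in> S" "s \<in> {0..1}" for p q s
    using convexD[OF \<open>convex S\<close> that(1,2), of "1 - s" s] that(3) by simp
  have integrable: "(\<lambda>s. u ((1 - s) * p + s * q)) integrable_on {0..1}"
    if "p \<in> S" "q \<in> S" for p q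
    by (intro integrable_continuous_interval continuous_on_compose2[OF lipschitz_on_continuous_on[OF u]])
      (auto intro!: continuous_intros in_S that)
  have pointwise: "norm (u ((1 - s) * a + s * b) - u ((1 - s) * a' + s * b')) \<le> M * d"
    if s: "s \<in> {0..1}" for s
  proof -
    have "\<bar>(1 - s) * (a - a') + s * (b - b')\<bar> \<le> (1 - s) * d + s * d"
      using s d by (intro abs_triangle_ineq[THEN order_trans] add_mono)
        (auto simp: abs_mult intro: mult_left_mono)
    then have "dist ((1 - s) * a + s * b) ((1 - s) * a' + s * b') \<le> d"
      by (simp add: dist_real_def algebra_simps)
    with lipschitz_onD[OF u in_S[OF S(1,2) s] in_S[OF S(3,4) s]] lipschitz_on_nonneg[OF u]
    show ?thesis
      by (simp add: dist_real_def) (meson mult_left_mono order_trans)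
  qed
  have "norm (integral {0..1} (\<lambda>s. u ((1 - s) * a + s * b) - u ((1 - s) * a' + s * b')))
      \<le> integral {0..1} (\<lambda>s::real. M * d)"
    by (intro integral_norm_bound_integral integrable_diff integrable S pointwise) auto
  then show ?thesis
    unfolding segment_mean_def by (simp add: integral_diff integrable S)
qed

lemma Avg1_eq_segment_mean:
  fixes u :: "real \<Rightarrow> real" and n :: nat
  assumes x: "x \<in> {0..1}" and u: "continuous_on {0..1} u"
  defines "h \<equiv> 1 / 2 ^ (n + 1)"
  shows "Avg1 n u x = segment_mean u (max 0 (x - h)) (min 1 (x + h))"
proof -
  define a b where "a = max 0 (x - h)" and "b = min 1 (x + h)"
  have "h > 0" unfolding h_def by simp
  with x have ab: "a < b" "0 \<le> a" "b \<le> 1" unfolding a_def b_def by auto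
  have U: "U1 n x = {x - h..<x + h} \<inter> {0..1}" unfolding U1_def h_def by simp
  have sub: "U1 n x \<subseteq> {a..b}" unfolding U a_def b_def by auto
  have "{a..b} - U1 n x \<subseteq> {b}" unfolding U a_def b_def using x \<open>h > 0\<close> by auto
  then have neg: "negligible ({a..b} - U1 n x)"
    using negligible_subset negligible_sing by blast
  have "integral (U1 n x) u = integral {a..b} u"
    using integral_subset_negligible[OF sub neg] .
  moreover have "measure lebesgue (U1 n x) = b - a"
    using measure_negligible_symdiff[of "{a..b}" "U1 n x"] sub neg ab
    by (simp add: Un_absorb2)
  moreover have "continuous_on {a..b} u"
    using ab by (intro continuous_on_subset[OF u]) auto
  ultimately have "Avg1 n u x = segment_mean u a b"
    unfolding Avg1_def by (simp add: segment_mean_eq_interval_average[OF ab(1)])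
  then show ?thesis
    unfolding a_def b_def .
qed

lemma Avg1_lipschitz_on:
  fixes u :: "real \<Rightarrow> real"
  assumes u: "M-lipschitz_on {0..1} u"
  shows "M-lipschitz_on {0..1} (Avg1 n u)"
proof (rule lipschitz_onI)
  fix x y :: real
  assume x: "x \<in> {0..1}" and y: "y \<in> {0..1}"
  define h :: real where "h = 1 / 2 ^ (n + 1)"
  have "h > 0" unfolding h_def by simp
  have "\<bar>segment_mean u (max 0 (x - h)) (min 1 (x + h)) - segment_mean u (max 0 (y - h)) (min 1 (y + h))\<bar>
      \<le> M * \<bar>x - y\<bar>"
    using x y \<open>h > 0\<close> by (intro segment_mean_lipschitz[OF u]) auto
  then show "dist (Avg1 n u x) (Avg1 n u y) \<le> M * dist x y"
    using Avg1_eq_segment_mean[OF _ lipschitz_on_continuous_on[OF u]] x y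
    unfolding dist_real_def h_def by simp
qed (rule lipschitz_on_nonneg[OF u])

text \<open>Two distinct points keep \<open>lip_semi\<close> away from the unspecified value \<open>Sup {}\<close>.\<close>

lemma lip_semi_lipschitz_on:
  assumes f: "L-lipschitz_on A f" and A: "a \<in> A" "b \<in> A" "a \<noteq> b"
  shows "(lip_semi A f)-lipschitz_on A f"
proof -
  let ?Q = "{\<bar>f x - f y\<bar> / \<bar>x - y\<bar> | x y. x \<in> A \<and> y \<in> A \<and> x \<noteq> y}"
  have "bdd_above ?Q"
  proof (rule bdd_aboveI)
    fix q assume "q \<in> ?Q"
    then obtain x y where "q = \<bar>f x - f y\<bar> / \<bar>x - y\<bar>" "x \<in> A" "y \<in> A" "x \<noteq> y"
      by blast
    with lipschitz_onD[OF f] show "q \<le> L"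
      by (simp add: dist_real_def pos_divide_le_eq)
  qed
  then have quotient_le: "\<bar>f x - f y\<bar> / \<bar>x - y\<bar> \<le> lip_semi A f"
    if "x \<in> A" "y \<in> A" "x \<noteq> y" for x y
    unfolding lip_semi_def using that by (blast intro: cSup_upper)
  show ?thesis
  proof (rule lipschitz_onI)
    show "dist (f x) (f y) \<le> lip_semi A f * dist x y" if "x \<in> A" "y \<in> A" for x y
      using quotient_le[OF that] by (cases "x = y") (simp_all add: dist_real_def divide_simps)
    show "0 \<le> lip_semi A f"
      using quotient_le[OF A] by (meson abs_ge_zero divide_nonneg_nonneg order_trans)
  qed
qed

lemma lip_semi_le:
  assumes "M-lipschitz_on A f" and "a \<in> A" "b \<in> A" "a \<noteq> b"
  shows "lip_semi A f \<le> M"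
  unfolding lip_semi_def
proof (rule cSup_least)
  show "{\<bar>f x - f y\<bar> / \<bar>x - y\<bar> | x y. x \<in> A \<and> y \<in> A \<and> x \<noteq> y} \<noteq> {}"
    using assms(2-4) by blast
  fix q assume "q \<in> {\<bar>f x - f y\<bar> / \<bar>x - y\<bar> | x y. x \<in> A \<and> y \<in> A \<and> x \<noteq> y}"
  with lipschitz_onD[OF assms(1)] show "q \<le> M"
    by (auto simp: dist_real_def pos_divide_le_eq)
qed

lemma V1_subset_unit_interval: "V1 n \<subseteq> {0..1}"
proof
  fix z assume "z \<in> V1 n"
  then obtain k :: nat where "z = real k / 2 ^ n" "real k \<le> 2 ^ n"
    unfolding V1_def by fastforce
  then show "z \<in> {0..1}" by simp
qed

lemma endpoints_in_V1: "0 \<in> V1 n" "1 \<in> V1 n"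
  unfolding V1_def by force+

theorem lemma4p12:
  fixes u :: "real \<Rightarrow> real"
  assumes "\<exists>L. L-lipschitz_on {0..1} u"
  shows "\<forall>n. (\<exists>L. L-lipschitz_on (V1 n) (Avg1 n u))
             \<and> lip_semi (V1 n) (Avg1 n u) \<le> lip_semi {0..1} u"
proof
  fix n
  let ?M = "lip_semi {0..1} u"
  have "?M-lipschitz_on {0..1} u"
    using assms lip_semi_lipschitz_on[of _ "{0..1}" u 0 1] by auto
  then have "?M-lipschitz_on (V1 n) (Avg1 n u)"
    using Avg1_lipschitz_on lipschitz_on_subset V1_subset_unit_interval by blast
  then show "(\<exists>L. L-lipschitz_on (V1 n) (Avg1 n u)) \<and> lip_semi (V1 n) (Avg1 n u) \<le> ?M"
    using lip_semi_le endpoints_in_V1 by fastforce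
qed

end
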